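(* Let $B$ be a commutative ring with identity and $A$ a dense subring of $B$. Then the map $i^*:\operatorname{spec} B\to\operatorname{spec} A$, $i^*(P)=P\cap A$, is one-one.
   Context: All rings are commutative with identity; subrings contain the identity. A subring $A$ of $B$ is dense in $B$ if for every ideal $I$ of $B$ and every $b\in B\setminus \operatorname{rad}(I)$ there exists $a\in B\setminus\operatorname{rad}(I)$ with $ab\in A$. *)

theory Defs
  imports "HOL-Algebra.Algebra"
begin

definition rad :: "('a, 'b) ring_scheme \<Rightarrow> 'a set \<Rightarrow> 'a set" where
  "rad R I = {x \<in> carrier R. \<exists>n::nat. x [^]\<^bsub>R\<^esub> n \<in> I}"

definition dense_subring :: "'a set \<Rightarrow> ('a, 'b) ring_scheme \<Rightarrow> bool" where
  "dense_subring A B \<longleftrightarrow> subring A B \<and>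
     (\<forall>I. ideal I B \<longrightarrow>
        (\<forall>b \<in> carrier B - rad B I. \<exists>a \<in> carrier B - rad B I. a \<otimes>\<^bsub>B\<^esub> b \<in> A))"

end

theory Submission
  imports Defs
begin

(* Let P be an ideal and Q a prime ideal of B with P \<inter> A \<subseteq> Q. If b \<in> P - Q, then b lies
   outside rad Q = Q, so density gives a \<notin> Q with a b \<in> A; but a b \<in> P \<inter> A \<subseteq> Q,
   contradicting primality of Q. *)

lemma (in primeideal) pow_mem_imp_mem:
  assumes "a \<in> carrier R" and "a [^] (n::nat) \<in> I"
  shows "a \<in> I"
  using assms(2)
proof (induction n)
  case 0
  then show ?case
    using one_imp_carrier I_notcarr by simp
next
  case (Suc n)
  then have "a [^] n \<otimes> a \<in> I" by simp
  then show ?case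
    using I_prime assms(1) Suc.IH by blast
qed

lemma (in primeideal) rad_eq: "rad R I = I"
proof
  show "rad R I \<subseteq> I"
    unfolding rad_def using pow_mem_imp_mem by blast
  show "I \<subseteq> rad R I"
  proof
    fix a assume "a \<in> I"
    then have "a \<in> carrier R" "a [^] (1::nat) \<in> I" by auto
    then show "a \<in> rad R I" unfolding rad_def by blast
  qed
qed

lemma dense_subring_ideal_subset_primeideal:
  assumes dense: "dense_subring A B"
    and I: "ideal I B" and Q: "primeideal Q B"
    and restr: "I \<inter> A \<subseteq> Q"
  shows "I \<subseteq> Q"
proof
  interpret I: ideal I B by (fact I)
  interpret Q: primeideal Q B by (fact Q)
  fix b assume "b \<in> I"
  then have b: "b \<in> carrier B" using I.Icarr by blast
  show "b \<in> Q"
  proof (rule ccontr)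
    assume "b \<notin> Q"
    then obtain a where a: "a \<in> carrier B" "a \<notin> Q" and ab: "a \<otimes>\<^bsub>B\<^esub> b \<in> A"
      using dense Q.is_ideal b Q.rad_eq unfolding dense_subring_def by blast
    have "a \<otimes>\<^bsub>B\<^esub> b \<in> I" using I.I_l_closed \<open>b \<in> I\<close> a(1) by blast
    with ab restr have "a \<otimes>\<^bsub>B\<^esub> b \<in> Q" by blast
    then show False using Q.I_prime a b \<open>b \<notin> Q\<close> by blast
  qed
qed

theorem theorem3p3:
  fixes B :: "('a, 'b) ring_scheme" and A :: "'a set"
  assumes "cring B"
    and "subring A B"
    and "dense_subring A B"
  shows "inj_on (\<lambda>P. P \<inter> A) {P. primeideal P B}"
proof (rule inj_onI)
  fix P Q assume "P \<in> {P. primeideal P B}" "Q \<in> {P. primeideal P B}"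
    and restr_eq: "P \<inter> A = Q \<inter> A"
  then have P: "primeideal P B" and Q: "primeideal Q B" by simp_all
  have "P \<subseteq> Q"
    using dense_subring_ideal_subset_primeideal[OF assms(3) primeideal.axioms(1)[OF P] Q]
      restr_eq by blast
  moreover have "Q \<subseteq> P"
    using dense_subring_ideal_subset_primeideal[OF assms(3) primeideal.axioms(1)[OF Q] P]
      restr_eq by blast
  ultimately show "P = Q" by (rule subset_antisym)
qed

end
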